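(* Let $M\in\mathbb{R}^{n\times n}$ be symmetric positive definite, $\delta_i,\delta_{i-1}>0$, $\epsilon\ge0$, and let $\bar P:\mathbb{R}^n\to\mathbb{R}$ (with the control value held fixed) be differentiable and $L$-weakly convex. For $\theta_i,\theta_{i-1},\theta_{i-2}\in\mathbb{R}^n$ let $$\bar E_i(\theta_i)=\frac{1}{2\delta_i^2}\Big\|\theta_i-\big(1+\tfrac{\delta_i}{\delta_{i-1}}\big)\theta_{i-1}+\tfrac{\delta_i}{\delta_{i-1}}\theta_{i-2}\Big\|_M^2+\bar P(\theta_i),$$ and suppose $\theta_i$ is an $\epsilon$-critical point, i.e. $2\Lambda_i\le\epsilon^2$ where $\Lambda_i=\frac12\|\nabla\bar E_i(\theta_i)\|^2$. Then $$\Big[\tfrac12\Big\|\tfrac{\theta_i-\theta_{i-1}}{\delta_i}\Big\|_M^2+\bar P(\theta_i)\Big]-\Big[\tfrac12\Big\|\tfrac{\theta_{i-1}-\theta_{i-2}}{\delta_{i-1}}\Big\|_M^2+\bar P(\theta_{i-1})\Big]\le\frac{L\delta_i^2+\delta_i}{2\sigma_{\min}(M)}\Big\|\frac{\theta_i-\theta_{i-1}}{\delta_i}\Big\|_M^2+\frac{\delta_i\epsilon^2}{2}.$$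
   Context: $\|x\|_M^2=x^TMx$; $\sigma_{\min}(M)$ is the smallest singular value of $M$. A function $\phi$ is $L$-weakly convex if $\phi(x)+\frac L2\|x\|^2$ is convex. The two bracketed quantities are the discrete Hamiltonians at frames $i$ and $i-1$, both evaluated with the same control value (the one used at frame $i$). *)

theory Defs
  imports "HOL-Analysis.Analysis"
begin

definition mnorm2 :: "real^'n^'n \<Rightarrow> real^'n \<Rightarrow> real" where
  "mnorm2 M x = x \<bullet> (M *v x)"

definition symmetric_pd :: "real^'n^'n \<Rightarrow> bool" where
  "symmetric_pd M \<longleftrightarrow> transpose M = M \<and> (\<forall>x. x \<noteq> 0 \<longrightarrow> x \<bullet> (M *v x) > 0)"

definition sigma_min :: "real^'n^'n \<Rightarrow> real" where
  "sigma_min M = Inf {norm (M *v x) | x. norm x = 1}"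

definition weakly_convex :: "real \<Rightarrow> ('a::real_inner \<Rightarrow> real) \<Rightarrow> bool" where
  "weakly_convex L \<phi> \<longleftrightarrow> convex_on UNIV (\<lambda>x. \<phi> x + L / 2 * (norm x)\<^sup>2)"

end

theory Submission
  imports Defs
begin

(*
  Put v = (th_i - th_im1) / d_i and w = (th_im1 - th_im2) / d_im1. The point inside the M-norm of
  the energy is th - th_i + d_i (v - w), so the gradient condition says that P has gradient
  g - M (v - w) / d_i at th_i with |g| <= eps. The tangent inequality of the weakly convex P bounds
  P th_i - P th_im1 by d_i <g, v> - v' M (v - w) + L d_i^2 |v|^2 / 2. Then 2 v' M w <= |v|_M^2 + |w|_M^2
  absorbs the previous kinetic energy, 2 <g, v> <= eps^2 + |v|^2, and |v|^2 <= |v|_M^2 / sigma_min M: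
  for symmetric positive definite M the least singular value is the least eigenvalue, the minimum
  of the quadratic form on the unit sphere, since a minimiser of a positive semidefinite form at
  which it vanishes lies in its kernel.
*)

lemma convex_on_has_derivative_above_tangent:
  fixes g :: "'a::real_normed_vector \<Rightarrow> real"
  assumes convex: "convex_on UNIV g" and deriv: "(g has_derivative g') (at x)"
  shows "g x + g' (y - x) \<le> g y"
proof -
  define \<phi> where "\<phi> = (\<lambda>t::real. g (x + t *\<^sub>R (y - x)))"
  have "convex_on UNIV \<phi>"
  proof (rule convex_onI)
    fix t a b :: real assume t: "0 < t" "t < 1"
    have "x + ((1 - t) *\<^sub>R a + t *\<^sub>R b) *\<^sub>R (y - x)
        = (1 - t) *\<^sub>R (x + a *\<^sub>R (y - x)) + t *\<^sub>R (x + b *\<^sub>R (y - x))"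
      by (simp add: algebra_simps)
    then show "\<phi> ((1 - t) *\<^sub>R a + t *\<^sub>R b) \<le> (1 - t) * \<phi> a + t * \<phi> b"
      unfolding \<phi>_def using convex_onD[OF convex, of t] t by simp
  qed simp
  moreover have "(\<phi> has_field_derivative g' (y - x)) (at 0)"
  proof -
    have "((\<lambda>t::real. x + t *\<^sub>R (y - x)) has_derivative (\<lambda>t. t *\<^sub>R (y - x))) (at 0)"
      by (auto intro!: derivative_eq_intros)
    from has_derivative_compose[OF this] deriv
    have "(\<phi> has_derivative (\<lambda>t. g' (t *\<^sub>R (y - x)))) (at 0)"
      unfolding \<phi>_def by simp
    moreover have "(\<lambda>t. g' (t *\<^sub>R (y - x))) = (\<lambda>t. g' (y - x) * t)"
      using linear_scale[OF has_derivative_linear[OF deriv]] by (auto simp: mult.commute)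
    ultimately show ?thesis by (simp add: has_field_derivative_def)
  qed
  ultimately have "g' (y - x) * (1 - 0) \<le> \<phi> 1 - \<phi> 0"
    by (intro convex_on_imp_above_tangent[where A = UNIV]) auto
  then show ?thesis unfolding \<phi>_def by simp
qed

lemma weakly_convex_above_tangent:
  fixes \<phi> :: "'a::real_inner \<Rightarrow> real"
  assumes "weakly_convex L \<phi>" and deriv: "(\<phi> has_derivative D) (at x)"
  shows "\<phi> x + D (y - x) - L / 2 * (norm (y - x))\<^sup>2 \<le> \<phi> y"
proof -
  have "((\<lambda>x. \<phi> x + L / 2 * (x \<bullet> x)) has_derivative (\<lambda>h. D h + L * (x \<bullet> h))) (at x)"
    by (rule derivative_eq_intros deriv refl | simp)+ (simp add: inner_commute[of _ x])
  with assms(1) have "\<phi> x + L / 2 * (x \<bullet> x) + (D (y - x) + L * (x \<bullet> (y - x))) \<le> \<phi> y + L / 2 * (y \<bullet> y)"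
    unfolding weakly_convex_def power2_norm_eq_inner
    by (intro convex_on_has_derivative_above_tangent) auto
  moreover have "L / 2 * (y \<bullet> y) = L / 2 * (x \<bullet> x) + L * (x \<bullet> (y - x)) + L / 2 * (norm (y - x))\<^sup>2"
    by (simp add: power2_norm_eq_inner inner_diff_left inner_diff_right inner_commute algebra_simps)
  ultimately show ?thesis by linarith
qed

lemma inner_matrix_vector_symmetric:
  fixes M :: "real^'n^'n"
  assumes "transpose M = M"
  shows "x \<bullet> (M *v y) = y \<bullet> (M *v x)"
proof -
  have "x \<bullet> (M *v y) = (x v* M) \<bullet> y" by (simp add: dot_lmul_matrix)
  also have "x v* M = M *v x" using vector_transpose_matrix[of x M] assms by simp
  finally show ?thesis by (simp add: inner_commute)
qed

lemma mnorm2_nonneg: "symmetric_pd M \<Longrightarrow> 0 \<le> mnorm2 M x"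
  unfolding symmetric_pd_def mnorm2_def by (metis order.refl inner_zero_left less_imp_le)

lemma mnorm2_cross_le:
  assumes "symmetric_pd M"
  shows "2 * (v \<bullet> (M *v w)) \<le> mnorm2 M v + mnorm2 M w"
proof -
  have "transpose M = M" using assms by (simp add: symmetric_pd_def)
  then have "mnorm2 M (v - w) = mnorm2 M v - 2 * (v \<bullet> (M *v w)) + mnorm2 M w"
    using inner_matrix_vector_symmetric[of M v w]
    by (simp add: mnorm2_def matrix_vector_mult_diff_distrib inner_diff_left inner_diff_right)
  then show ?thesis using mnorm2_nonneg[OF assms, of "v - w"] by simp
qed

lemma has_derivative_mnorm2:
  fixes M :: "real^'n^'n"
  assumes "transpose M = M"
  shows "((\<lambda>y. mnorm2 M (y - c)) has_derivative (\<lambda>h. 2 * (h \<bullet> (M *v (x - c))))) (at x)"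
proof -
  have "((\<lambda>y. (y - c) \<bullet> (M *v (y - c))) has_derivative
          (\<lambda>h. h \<bullet> (M *v (x - c)) + (x - c) \<bullet> (M *v h))) (at x)"
    by (auto intro!: derivative_eq_intros
          bounded_linear.has_derivative[OF matrix_vector_mul_bounded_linear])
  then show ?thesis
    unfolding mnorm2_def using inner_matrix_vector_symmetric[OF assms, of "x - c"] by simp
qed

lemma quadratic_form_attains_min_on_sphere:
  fixes M :: "real^'n^'n"
  obtains x where "norm x = 1" and "\<And>y. (x \<bullet> (M *v x)) * (norm y)\<^sup>2 \<le> y \<bullet> (M *v y)"
proof -
  have "sphere (0::real^'n) 1 \<noteq> {}" by simp
  moreover have "continuous_on (sphere 0 1) (\<lambda>x::real^'n. x \<bullet> (M *v x))"
    by (intro continuous_intros)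
  ultimately obtain x where x: "x \<in> sphere 0 1"
    and min: "\<And>u. u \<in> sphere 0 1 \<Longrightarrow> x \<bullet> (M *v x) \<le> u \<bullet> (M *v u)"
    using continuous_attains_inf[OF compact_sphere] by blast
  show thesis
  proof (rule that)
    show "norm x = 1" using x by simp
    fix y :: "real^'n"
    show "(x \<bullet> (M *v x)) * (norm y)\<^sup>2 \<le> y \<bullet> (M *v y)"
    proof (cases "y = 0")
      case False
      have "x \<bullet> (M *v x) \<le> ((1 / norm y) *\<^sub>R y) \<bullet> (M *v ((1 / norm y) *\<^sub>R y))"
        using False by (intro min) simp
      also have "\<dots> = (y \<bullet> (M *v y)) / (norm y)\<^sup>2"
        by (simp add: matrix_vector_mult_scaleR power2_eq_square)
      finally show ?thesis using False by (simp add: field_simps)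
    qed simp
  qed
qed

lemma psd_quadratic_form_zero_imp_kernel:
  fixes A :: "real^'n^'n"
  assumes sym: "transpose A = A" and psd: "\<And>y. 0 \<le> y \<bullet> (A *v y)"
    and zero: "x \<bullet> (A *v x) = 0"
  shows "A *v x = 0"
proof -
  define z where "z = A *v x"
  define c where "c = z \<bullet> (A *v z)"
  \<comment> \<open>the form along x - t z is t (t c - 2 |z|^2), which is negative for small t > 0 unless z = 0\<close>
  have along_z: "2 * (norm z)\<^sup>2 \<le> t * c" if "t > 0" for t
  proof -
    have "0 \<le> (x - t *\<^sub>R z) \<bullet> (A *v (x - t *\<^sub>R z))" by (rule psd)
    also have "\<dots> = t * (t * c - 2 * (norm z)\<^sup>2)"
      using zero inner_matrix_vector_symmetric[OF sym, of x z]
      by (simp add: z_def c_def matrix_vector_mult_diff_distrib matrix_vector_mult_scaleR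
          inner_diff_left inner_diff_right power2_norm_eq_inner algebra_simps)
    finally show ?thesis using \<open>t > 0\<close> by (simp add: zero_le_mult_iff)
  qed
  have "(norm z)\<^sup>2 \<le> 0"
  proof (rule ccontr)
    assume "\<not> (norm z)\<^sup>2 \<le> 0"
    then have pos: "(norm z)\<^sup>2 > 0" by simp
    define t where "t = (norm z)\<^sup>2 / (\<bar>c\<bar> + 1)"
    have "t > 0" using pos by (simp add: t_def)
    have "t * c \<le> t * \<bar>c\<bar>" using \<open>t > 0\<close> by (simp add: mult_left_mono)
    also have "t * \<bar>c\<bar> < (norm z)\<^sup>2" using pos by (simp add: t_def field_simps)
    finally show False using along_z[OF \<open>t > 0\<close>] pos by simp
  qed
  then show ?thesis by (simp add: z_def)
qed

lemma least_quadratic_form_eigenvector: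
  fixes M :: "real^'n^'n"
  assumes sym: "transpose M = M" and least: "\<And>y. lam * (norm y)\<^sup>2 \<le> y \<bullet> (M *v y)"
    and attained: "x \<bullet> (M *v x) = lam * (norm x)\<^sup>2"
  shows "M *v x = lam *\<^sub>R x"
proof -
  define A where "A = M - lam *\<^sub>R mat 1"
  have A: "A *v y = M *v y - lam *\<^sub>R y" for y
    by (simp add: A_def matrix_vector_mult_diff_rdistrib flip: scaleR_matrix_vector_assoc)
  have "A *v x = 0"
  proof (rule psd_quadratic_form_zero_imp_kernel)
    show "transpose A = A"
      using sym by (simp add: A_def transpose_def vec_eq_iff mat_def)
    show "0 \<le> y \<bullet> (A *v y)" for y
      using least[of y] by (simp add: A inner_diff_right power2_norm_eq_inner)
    show "x \<bullet> (A *v x) = 0"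
      using attained by (simp add: A inner_diff_right power2_norm_eq_inner)
  qed
  then show ?thesis by (simp add: A)
qed

lemma sigma_min_eq_least_quadratic_form:
  fixes M :: "real^'n^'n"
  assumes M: "symmetric_pd M" and unit: "norm x = 1"
    and least: "\<And>y. (x \<bullet> (M *v x)) * (norm y)\<^sup>2 \<le> y \<bullet> (M *v y)"
  shows "sigma_min M = x \<bullet> (M *v x)"
proof (rule antisym)
  have "x \<noteq> 0" using unit by auto
  then have "x \<bullet> (M *v x) > 0"
    using M by (simp add: symmetric_pd_def)
  moreover have "M *v x = (x \<bullet> (M *v x)) *\<^sub>R x"
    using M unit by (intro least_quadratic_form_eigenvector least) (auto simp: symmetric_pd_def)
  ultimately have "norm (M *v x) = x \<bullet> (M *v x)"
    using unit by (metis norm_scaleR abs_of_pos mult_1_right)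
  then show "sigma_min M \<le> x \<bullet> (M *v x)"
    unfolding sigma_min_def using unit
    by (intro cInf_lower[THEN order.trans] bdd_belowI[of _ 0]) auto
next
  show "x \<bullet> (M *v x) \<le> sigma_min M"
    unfolding sigma_min_def
  proof (rule cInf_greatest)
    show "{norm (M *v y) |y. norm y = 1} \<noteq> {}" using unit by auto
    fix r assume "r \<in> {norm (M *v y) |y. norm y = 1}"
    then obtain y where y: "norm y = 1" "r = norm (M *v y)" by auto
    have "x \<bullet> (M *v x) \<le> y \<bullet> (M *v y)" using least[of y] y by simp
    also have "\<dots> \<le> norm y * norm (M *v y)" by (rule norm_cauchy_schwarz)
    finally show "x \<bullet> (M *v x) \<le> r" using y by simp
  qed
qed

lemma sigma_min_pos:
  assumes "symmetric_pd M"
  shows "0 < sigma_min M"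
proof -
  obtain x where x: "norm x = 1" and least: "\<And>y. (x \<bullet> (M *v x)) * (norm y)\<^sup>2 \<le> y \<bullet> (M *v y)"
    using quadratic_form_attains_min_on_sphere[of M] by blast
  have "x \<noteq> 0" using x by auto
  then show ?thesis
    using assms sigma_min_eq_least_quadratic_form[OF assms x least] by (simp add: symmetric_pd_def)
qed

lemma sigma_min_mult_norm_le_mnorm2:
  assumes "symmetric_pd M"
  shows "sigma_min M * (norm v)\<^sup>2 \<le> mnorm2 M v"
proof -
  obtain x where "norm x = 1" "\<And>y. (x \<bullet> (M *v x)) * (norm y)\<^sup>2 \<le> y \<bullet> (M *v y)"
    using quadratic_form_attains_min_on_sphere[of M] by blast
  with assms show ?thesis
    by (simp add: sigma_min_eq_least_quadratic_form mnorm2_def)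
qed

lemma discrete_energy_increment_le:
  fixes M :: "real^'n^'n" and P :: "real^'n \<Rightarrow> real"
  assumes M: "symmetric_pd M" and d: "d > 0" and L: "L \<ge> 0" and Pwc: "weakly_convex L P"
    and dP: "(P has_derivative (\<lambda>h. h \<bullet> (g - (1 / d) *\<^sub>R (M *v (v - w))))) (at x)"
    and step: "x - x' = d *\<^sub>R v" and g: "(norm g)\<^sup>2 \<le> eps\<^sup>2"
  shows "(1/2 * mnorm2 M v + P x) - (1/2 * mnorm2 M w + P x')
         \<le> (L * d\<^sup>2 + d) / (2 * sigma_min M) * mnorm2 M v + d * eps\<^sup>2 / 2"
proof -
  have "x' - x = - (d *\<^sub>R v)" using step by (simp add: algebra_simps)
  then have tangent: "P x - P x' \<le> d * (v \<bullet> g) - (mnorm2 M v - v \<bullet> (M *v w)) + L / 2 * (d\<^sup>2 * (norm v)\<^sup>2)"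
    using weakly_convex_above_tangent[OF Pwc dP, of x'] d
    by (simp add: mnorm2_def matrix_vector_mult_diff_distrib inner_diff_right power_mult_distrib
        flip: right_diff_distrib)
  have cross: "2 * (v \<bullet> (M *v w)) \<le> mnorm2 M v + mnorm2 M w"
    using M by (rule mnorm2_cross_le)
  have "v \<bullet> g \<le> (eps\<^sup>2 + (norm v)\<^sup>2) / 2"
  proof -
    have "v \<bullet> g \<le> norm v * norm g" by (rule norm_cauchy_schwarz)
    also have "\<dots> \<le> ((norm g)\<^sup>2 + (norm v)\<^sup>2) / 2"
      using sum_squares_bound[of "norm v" "norm g"] by (simp add: algebra_simps)
    finally show ?thesis using g by simp
  qed
  then have gradient_term: "d * (v \<bullet> g) \<le> d * (eps\<^sup>2 + (norm v)\<^sup>2) / 2"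
    using d by (simp add: mult_left_mono)
  have "(norm v)\<^sup>2 \<le> mnorm2 M v / sigma_min M"
    using sigma_min_mult_norm_le_mnorm2[OF M] sigma_min_pos[OF M] by (simp add: field_simps)
  then have "(L * d\<^sup>2 + d) / 2 * (norm v)\<^sup>2 \<le> (L * d\<^sup>2 + d) / 2 * (mnorm2 M v / sigma_min M)"
    using L d by (intro mult_left_mono) auto
  also have "\<dots> = (L * d\<^sup>2 + d) / (2 * sigma_min M) * mnorm2 M v" by simp
  finally have sigma: "(L * d\<^sup>2 + d) / 2 * (norm v)\<^sup>2 \<le> (L * d\<^sup>2 + d) / (2 * sigma_min M) * mnorm2 M v" .
  have "L / 2 * (d\<^sup>2 * (norm v)\<^sup>2) + d * (eps\<^sup>2 + (norm v)\<^sup>2) / 2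
      = (L * d\<^sup>2 + d) / 2 * (norm v)\<^sup>2 + d * eps\<^sup>2 / 2"
    by (simp add: field_simps)
  with tangent cross gradient_term sigma show ?thesis by linarith
qed

theorem lemma12:
  fixes M :: "real^'n^'n" and P :: "real^'n \<Rightarrow> real"
    and th_i th_im1 th_im2 gE :: "real^'n"
    and d_i d_im1 eps L :: real
  assumes M: "symmetric_pd M"
    and d_i: "d_i > 0" and d_im1: "d_im1 > 0" and eps: "eps \<ge> 0"
    and Pdiff: "\<forall>x. P differentiable (at x)"
    and L: "L \<ge> 0" and Pwc: "weakly_convex L P"
    and gradE: "GDERIV (\<lambda>th. 1 / (2 * d_i\<^sup>2) *
                   mnorm2 M (th - (1 + d_i / d_im1) *\<^sub>R th_im1 + (d_i / d_im1) *\<^sub>R th_im2)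
                 + P th) th_i :> gE"
    and crit: "2 * (1/2 * (norm gE)\<^sup>2) \<le> eps\<^sup>2"
  shows "(1/2 * mnorm2 M ((1 / d_i) *\<^sub>R (th_i - th_im1)) + P th_i)
         - (1/2 * mnorm2 M ((1 / d_im1) *\<^sub>R (th_im1 - th_im2)) + P th_im1)
         \<le> (L * d_i\<^sup>2 + d_i) / (2 * sigma_min M) * mnorm2 M ((1 / d_i) *\<^sub>R (th_i - th_im1))
           + d_i * eps\<^sup>2 / 2"
proof -
  define v where "v = (1 / d_i) *\<^sub>R (th_i - th_im1)"
  define w where "w = (1 / d_im1) *\<^sub>R (th_im1 - th_im2)"
  define c where "c = (1 + d_i / d_im1) *\<^sub>R th_im1 - (d_i / d_im1) *\<^sub>R th_im2"
  have shift: "th_i - c = d_i *\<^sub>R (v - w)"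
    using d_i by (simp add: v_def w_def c_def algebra_simps)
  have "((\<lambda>th. 1 / (2 * d_i\<^sup>2) * mnorm2 M (th - c)) has_derivative
          (\<lambda>h. h \<bullet> ((1 / d_i) *\<^sub>R (M *v (v - w))))) (at th_i)"
  proof (rule has_derivative_eq_rhs)
    show "((\<lambda>th. 1 / (2 * d_i\<^sup>2) * mnorm2 M (th - c)) has_derivative
            (\<lambda>h. 1 / (2 * d_i\<^sup>2) * (2 * (h \<bullet> (M *v (th_i - c)))))) (at th_i)"
      using M by (intro has_derivative_mult_right has_derivative_mnorm2) (simp add: symmetric_pd_def)
    show "(\<lambda>h. 1 / (2 * d_i\<^sup>2) * (2 * (h \<bullet> (M *v (th_i - c)))))
        = (\<lambda>h. h \<bullet> ((1 / d_i) *\<^sub>R (M *v (v - w))))"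
      using d_i shift by (simp add: matrix_vector_mult_scaleR power2_eq_square)
  qed
  moreover have "((\<lambda>th. 1 / (2 * d_i\<^sup>2) * mnorm2 M (th - c) + P th) has_derivative
                    (\<lambda>h. h \<bullet> gE)) (at th_i)"
    using gradE unfolding gderiv_def by (simp add: c_def algebra_simps)
  ultimately have "(P has_derivative (\<lambda>h. h \<bullet> (gE - (1 / d_i) *\<^sub>R (M *v (v - w))))) (at th_i)"
    by (auto dest: has_derivative_diff simp: inner_diff_right)
  moreover have "th_i - th_im1 = d_i *\<^sub>R v" using d_i by (simp add: v_def)
  moreover have "(norm gE)\<^sup>2 \<le> eps\<^sup>2" using crit by simp
  ultimately show ?thesis
    using discrete_energy_increment_le[OF M d_i L Pwc] unfolding v_def w_def by blast
qed

end
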